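(* Let $N$ be a smooth connected manifold, Riemannian-embedded in a matrix algebra $\mathcal M$ with $0\in N$. Then $L^2_0(S^1,N)=L^2(S^1,N)$. Moreover, every loop $\gamma\in C^\infty(S^1,N)$ is connected, by a continuous path in $L^2(S^1,N)$, to a null-homotopic piecewise smooth loop.
   Context: $\mathcal M$ is an algebra of complex matrices with Hermitian product $(A,B)\mapsto \mathrm{tr}(AB^* )$. $S^1=\mathbb R/\mathbb Z$. For $s\in\mathbb R$, $H^s(S^1,\mathcal M)$ is the completion of $C^\infty(S^1,\mathcal M)$ for the norm $\|f\|_s^2=\sum_{n\in\mathbb Z}(1+|n|)^{2s}\|f_n\|^2$, $f_n$ the Fourier coefficients; $L^2=H^0$. $H^s(S^1,N)$ is the closure of $C^\infty(S^1,N)$ in $H^s(S^1,\mathcal M)$, and $H^s_0(S^1,N)$ is the closure in $H^s(S^1,\mathcal M)$ of the based loops $C^\infty_0(S^1,N)=\{\gamma\in C^\infty(S^1,N):\gamma(0)=0\}$. $L^2(S^1,N)$ and $L^2_0(S^1,N)$ carry the topology induced by the $L^2$-norm. *)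

theory Defs
  imports "HOL-Analysis.Analysis"
begin

text \<open>The matrix algebra M = complex n x n matrices, as the type complex^'n^'n.
  Its norm (Euclidean norm of the entries) is the Frobenius norm sqrt(tr(A A^* )).\<close>

text \<open>C-infinity maps on an open set: differentiable, and every directional derivative
  is again C-infinity (coinductively; in finite dimensions this is the usual notion).\<close>
coinductive smooth_on :: "'a::real_normed_vector set \<Rightarrow> ('a \<Rightarrow> 'b::real_normed_vector) \<Rightarrow> bool"
  for U where
  "(\<forall>x\<in>U. (f has_derivative f' x) (at x)) \<Longrightarrow> (\<forall>v. smooth_on U (\<lambda>x. f' x v)) \<Longrightarrow> smooth_on U f"

definition smooth_submanifold :: "'a::euclidean_space set \<Rightarrow> bool" where
  "smooth_submanifold N \<longleftrightarrow>
     (\<forall>p\<in>N. \<exists>U V (\<phi>::'a\<Rightarrow>'a) \<psi> L. open U \<and> p \<in> U \<and> open V \<and>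
        smooth_on U \<phi> \<and> smooth_on V \<psi> \<and> \<phi> ` U = V \<and>
        (\<forall>x\<in>U. \<psi> (\<phi> x) = x) \<and> (\<forall>y\<in>V. \<phi> (\<psi> y) = y) \<and>
        subspace L \<and> \<phi> ` (N \<inter> U) = L \<inter> V)"

text \<open>Loops S^1 = R/Z -> M are 1-periodic functions real => M.\<close>
definition smooth_loops :: "'a::real_normed_vector set \<Rightarrow> (real \<Rightarrow> 'a) set" where
  "smooth_loops N = {\<gamma>. smooth_on UNIV \<gamma> \<and> (\<forall>t. \<gamma> (t + 1) = \<gamma> t) \<and> range \<gamma> \<subseteq> N}"

definition based_smooth_loops :: "'a::real_normed_vector set \<Rightarrow> (real \<Rightarrow> 'a) set" where
  "based_smooth_loops N = {\<gamma> \<in> smooth_loops N. \<gamma> 0 = 0}"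

definition L2_dist :: "(real \<Rightarrow> 'a::euclidean_space) \<Rightarrow> (real \<Rightarrow> 'a) \<Rightarrow> real" where
  "L2_dist f g = sqrt (LINT t:{0..1}|lborel. (norm (f t - g t))\<^sup>2)"

definition square_integrable :: "(real \<Rightarrow> 'a::euclidean_space) \<Rightarrow> bool" where
  "square_integrable f \<longleftrightarrow> f \<in> borel_measurable lborel \<and>
     set_integrable lborel {0..1} (\<lambda>t. (norm (f t))\<^sup>2)"

text \<open>L^2-closure of a set of loops (elements represented by functions; the set is
  closed under a.e. modification).\<close>
definition L2_closure :: "(real \<Rightarrow> 'a::euclidean_space) set \<Rightarrow> (real \<Rightarrow> 'a) set" where
  "L2_closure S = {f. square_integrable f \<and> (\<forall>e>0. \<exists>g\<in>S. L2_dist f g < e)}"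

definition L2_loops :: "'a::euclidean_space set \<Rightarrow> (real \<Rightarrow> 'a) set" where
  "L2_loops N = L2_closure (smooth_loops N)"

definition L2_0_loops :: "'a::euclidean_space set \<Rightarrow> (real \<Rightarrow> 'a) set" where
  "L2_0_loops N = L2_closure (based_smooth_loops N)"

definition piecewise_smooth_loop :: "'a::real_normed_vector set \<Rightarrow> (real \<Rightarrow> 'a) \<Rightarrow> bool" where
  "piecewise_smooth_loop N \<sigma> \<longleftrightarrow> continuous_on UNIV \<sigma> \<and> (\<forall>t. \<sigma> (t + 1) = \<sigma> t) \<and> range \<sigma> \<subseteq> N \<and>
     (\<exists>P. finite P \<and> P \<subseteq> {0..1} \<and> 0 \<in> P \<and> 1 \<in> P \<and>
        (\<forall>a\<in>P. \<forall>b\<in>P. a < b \<and> {a<..<b} \<inter> P = {} \<longrightarrow>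
           (\<exists>g. smooth_on UNIV g \<and> (\<forall>t\<in>{a..b}. \<sigma> t = g t))))"

definition null_homotopic_loop :: "'a::real_normed_vector set \<Rightarrow> (real \<Rightarrow> 'a) \<Rightarrow> bool" where
  "null_homotopic_loop N \<sigma> \<longleftrightarrow> (\<exists>a. homotopic_loops N \<sigma> (\<lambda>t. a))"

definition L2_path_connects :: "'a::euclidean_space set \<Rightarrow> (real \<Rightarrow> real \<Rightarrow> 'a) \<Rightarrow> (real \<Rightarrow> 'a) \<Rightarrow> (real \<Rightarrow> 'a) \<Rightarrow> bool" where
  "L2_path_connects N p f g \<longleftrightarrow> (\<forall>s\<in>{0..1}. p s \<in> L2_loops N) \<and> p 0 = f \<and> p 1 = g \<and>
     (\<forall>s\<in>{0..1}. \<forall>e>0. \<exists>d>0. \<forall>s'\<in>{0..1}. \<bar>s' - s\<bar> < d \<longrightarrow> L2_dist (p s') (p s) < e)"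

end

theory Submission
  imports Defs "HOL-Computational_Algebra.Polynomial"
begin

text \<open>Precomposing a smooth loop \<open>\<gamma>\<close> with a smooth map \<open>pinch s\<close> of \<open>[0, 1]\<close> that is the
  identity on \<open>[s, 1 - s]\<close> and vanishes near the endpoints changes \<open>\<gamma>\<close> only on a set of
  measure \<open>2 s\<close>, by a uniformly bounded amount. Hence the pinched loops tend to \<open>\<gamma>\<close> in \<open>L\<^sup>2\<close>
  as \<open>s \<rightarrow> 0\<close>, depend continuously on \<open>s > 0\<close>, and for \<open>s = 1\<close> give the constant loop \<open>\<gamma> 0\<close>:
  an \<open>L\<^sup>2\<close>-path to a null-homotopic loop. For the first claim, connectedness of \<open>N\<close> gives a
  smooth path \<open>c\<close> in \<open>N\<close> from \<open>0\<close> to \<open>\<gamma> 0\<close>; inserting \<open>c\<close> and its reverse into the pinched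
  arcs yields a loop based at \<open>0\<close> which again differs from \<open>\<gamma>\<close> only on a set of measure
  \<open>2 s\<close>. So based loops are \<open>L\<^sup>2\<close>-dense in the smooth loops and the two closures agree.\<close>

section \<open>Smooth maps\<close>

lemma smooth_onE:
  assumes "smooth_on U f"
  obtains f' where "\<And>x. x \<in> U \<Longrightarrow> (f has_derivative f' x) (at x)" "\<And>v. smooth_on U (\<lambda>x. f' x v)"
  using assms by (cases rule: smooth_on.cases) blast

lemma smooth_on_const: "smooth_on U (\<lambda>x. c)"
  by (coinduction arbitrary: c rule: smooth_on.coinduct) (auto intro!: exI[of _ "\<lambda>x v. 0"])

lemma smooth_on_id: "smooth_on U (\<lambda>x. x)"
  by (coinduction rule: smooth_on.coinduct) (auto intro!: exI[of _ "\<lambda>x v. v"] simp: smooth_on_const)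

lemma smooth_on_bounded_linear_comp:
  assumes L: "bounded_linear L" and f: "smooth_on U f"
  shows "smooth_on U (\<lambda>x. L (f x))"
  using f
proof (coinduction arbitrary: f rule: smooth_on.coinduct)
  case (smooth_on f)
  obtain f' where "\<And>x. x \<in> U \<Longrightarrow> (f has_derivative f' x) (at x)" "\<And>v. smooth_on U (\<lambda>x. f' x v)"
    using smooth_onE[OF smooth_on] by blast
  then show ?case
    by (intro exI[of _ "\<lambda>x. L (f x)"] exI[of _ "\<lambda>x v. L (f' x v)"])
       (auto intro!: bounded_linear.has_derivative[OF L])
qed

lemma smooth_on_imp_continuous_on: "smooth_on U f \<Longrightarrow> continuous_on U f"
  by (metis smooth_onE has_derivative_continuous continuous_at_imp_continuous_on)

text \<open>Sums of products of smooth functions are closed under directional derivatives (product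
  rule), which makes them a coinduction invariant.\<close>

definition sum_of_products :: "(('a \<Rightarrow> real) \<times> ('a \<Rightarrow> 'b::real_normed_vector)) list \<Rightarrow> 'a \<Rightarrow> 'b" where
  "sum_of_products xs = (\<lambda>x. \<Sum>(a, b)\<leftarrow>xs. a x *\<^sub>R b x)"

lemma sum_of_products_has_derivative:
  assumes "\<forall>(a, b)\<in>set xs. smooth_on U a \<and> smooth_on U b"
  obtains h' where "\<And>x. x \<in> U \<Longrightarrow> (sum_of_products xs has_derivative h' x) (at x)"
    and "\<And>v. \<exists>ys. (\<lambda>x. h' x v) = sum_of_products ys \<and> (\<forall>(a, b)\<in>set ys. smooth_on U a \<and> smooth_on U b)"
  using assms
proof (induction xs arbitrary: thesis)
  case Nil
  show ?case
    by (rule Nil.prems(1)[of "\<lambda>x v. 0"]) (auto simp: sum_of_products_def intro!: exI[of _ "[]"])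
next
  case (Cons p xs)
  obtain a b where p: "p = (a, b)" by fastforce
  with Cons.prems(2) have a: "smooth_on U a" and b: "smooth_on U b" by auto
  obtain h' where h'D: "\<And>x. x \<in> U \<Longrightarrow> (sum_of_products xs has_derivative h' x) (at x)"
    and h'S: "\<And>v. \<exists>ys. (\<lambda>x. h' x v) = sum_of_products ys \<and> (\<forall>(a, b)\<in>set ys. smooth_on U a \<and> smooth_on U b)"
    using Cons.IH Cons.prems(2) by auto
  obtain a' where a'D: "\<And>x. x \<in> U \<Longrightarrow> (a has_derivative a' x) (at x)" and a'S: "\<And>v. smooth_on U (\<lambda>x. a' x v)"
    using smooth_onE[OF a] by blast
  obtain b' where b'D: "\<And>x. x \<in> U \<Longrightarrow> (b has_derivative b' x) (at x)" and b'S: "\<And>v. smooth_on U (\<lambda>x. b' x v)"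
    using smooth_onE[OF b] by blast
  show ?case
  proof (rule Cons.prems(1)[of "\<lambda>x v. a x *\<^sub>R b' x v + a' x v *\<^sub>R b x + h' x v"])
    fix x assume "x \<in> U"
    then show "(sum_of_products (p # xs) has_derivative (\<lambda>v. a x *\<^sub>R b' x v + a' x v *\<^sub>R b x + h' x v)) (at x)"
      unfolding p sum_of_products_def by (auto intro!: derivative_eq_intros a'D b'D h'D[unfolded sum_of_products_def])
  next
    fix v
    obtain ys where ys: "(\<lambda>x. h' x v) = sum_of_products ys" "\<forall>(a, b)\<in>set ys. smooth_on U a \<and> smooth_on U b"
      using h'S by blast
    with a b a'S b'S show "\<exists>ys. (\<lambda>x. a x *\<^sub>R b' x v + a' x v *\<^sub>R b x + h' x v) = sum_of_products ys \<and>
        (\<forall>(a, b)\<in>set ys. smooth_on U a \<and> smooth_on U b)"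
      by (intro exI[of _ "(a, \<lambda>x. b' x v) # (\<lambda>x. a' x v, b) # ys"])
         (auto simp: sum_of_products_def fun_eq_iff add.assoc dest: fun_cong)
  qed
qed

lemma smooth_on_sum_of_products:
  assumes "\<forall>(a, b)\<in>set xs. smooth_on U a \<and> smooth_on U b"
  shows "smooth_on U (sum_of_products xs)"
  using assms
proof (coinduction arbitrary: xs rule: smooth_on.coinduct)
  case (smooth_on xs)
  then obtain h' where "\<And>x. x \<in> U \<Longrightarrow> (sum_of_products xs has_derivative h' x) (at x)"
    "\<And>v. \<exists>ys. (\<lambda>x. h' x v) = sum_of_products ys \<and> (\<forall>(a, b)\<in>set ys. smooth_on U a \<and> smooth_on U b)"
    by (rule sum_of_products_has_derivative) blast
  then show ?case by (intro exI[of _ "sum_of_products xs"] exI[of _ h']) auto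
qed

lemma smooth_on_scaleR:
  assumes "smooth_on U a" "smooth_on U b"
  shows "smooth_on U (\<lambda>x. a x *\<^sub>R b x)"
  using smooth_on_sum_of_products[of "[(a, b)]" U] assms by (simp add: sum_of_products_def)

lemma smooth_on_mult:
  fixes a b :: "_ \<Rightarrow> real"
  assumes "smooth_on U a" "smooth_on U b"
  shows "smooth_on U (\<lambda>x. a x * b x)"
  using smooth_on_scaleR[OF assms] by simp

lemma smooth_on_add:
  assumes "smooth_on U f" "smooth_on U g"
  shows "smooth_on U (\<lambda>x. f x + g x)"
  using smooth_on_sum_of_products[of "[(\<lambda>x. 1, f), (\<lambda>x. 1, g)]" U] assms
  by (simp add: sum_of_products_def smooth_on_const)

lemma smooth_on_diff:
  assumes "smooth_on U f" "smooth_on U g"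
  shows "smooth_on U (\<lambda>x. f x - g x)"
  using smooth_on_sum_of_products[of "[(\<lambda>x. 1, f), (\<lambda>x. -1, g)]" U] assms
  by (simp add: sum_of_products_def smooth_on_const)

text \<open>Likewise sums of terms \<open>a x *\<^sub>R k (f x)\<close> are closed under directional derivatives by the
  chain rule, once \<open>k' (f x) (f' x v)\<close> is expanded in a basis.\<close>

definition comp_combination :: "('a \<Rightarrow> 'm) \<Rightarrow> (('a \<Rightarrow> real) \<times> ('m \<Rightarrow> 'b::real_normed_vector)) list \<Rightarrow> 'a \<Rightarrow> 'b" where
  "comp_combination f xs = (\<lambda>x. \<Sum>(a, k)\<leftarrow>xs. a x *\<^sub>R k (f x))"

lemma linear_euclidean_expansion:
  fixes l :: "'m::euclidean_space \<Rightarrow> 'b::real_vector"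
  assumes "linear l"
  shows "l v = (\<Sum>i\<in>Basis. (v \<bullet> i) *\<^sub>R l i)"
proof -
  have "l v = l (\<Sum>i\<in>Basis. (v \<bullet> i) *\<^sub>R i)" by (simp add: euclidean_representation)
  then show ?thesis by (simp add: linear_sum[OF assms] linear_scale[OF assms])
qed

lemma comp_combination_basis_expansion:
  fixes g :: "'a \<Rightarrow> 'm::euclidean_space"
  assumes "set bl = Basis" "distinct bl" "linear (k (f x))"
  shows "comp_combination f (map (\<lambda>i. (\<lambda>x. a x * (g x \<bullet> i), \<lambda>y. k y i)) bl) x = a x *\<^sub>R k (f x) (g x)"
  using assms linear_euclidean_expansion[OF assms(3), of "g x"]
  by (simp add: comp_combination_def o_def sum_list_distinct_conv_sum_set scaleR_sum_right)

lemma comp_combination_has_derivative: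
  fixes f :: "'a::real_normed_vector \<Rightarrow> 'm::euclidean_space"
  assumes f: "smooth_on U f" and fV: "f ` U \<subseteq> V"
    and xs: "\<forall>(a, k)\<in>set xs. smooth_on U a \<and> smooth_on V k"
  obtains h' where "\<And>x. x \<in> U \<Longrightarrow> (comp_combination f xs has_derivative h' x) (at x)"
    and "\<And>v. \<exists>ys. (\<lambda>x. h' x v) = comp_combination f ys \<and> (\<forall>(a, k)\<in>set ys. smooth_on U a \<and> smooth_on V k)"
  using xs
proof (induction xs arbitrary: thesis)
  case Nil
  show ?case
    by (rule Nil.prems(1)[of "\<lambda>x v. 0"]) (auto simp: comp_combination_def intro!: exI[of _ "[]"])
next
  case (Cons p xs)
  obtain a k where p: "p = (a, k)" by fastforce
  with Cons.prems(2) have a: "smooth_on U a" and k: "smooth_on V k" by auto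
  obtain h' where h'D: "\<And>x. x \<in> U \<Longrightarrow> (comp_combination f xs has_derivative h' x) (at x)"
    and h'S: "\<And>v. \<exists>ys. (\<lambda>x. h' x v) = comp_combination f ys \<and> (\<forall>(a, k)\<in>set ys. smooth_on U a \<and> smooth_on V k)"
    using Cons.IH Cons.prems(2) by auto
  obtain a' where a'D: "\<And>x. x \<in> U \<Longrightarrow> (a has_derivative a' x) (at x)" and a'S: "\<And>v. smooth_on U (\<lambda>x. a' x v)"
    using smooth_onE[OF a] by blast
  obtain k' where k'D: "\<And>y. y \<in> V \<Longrightarrow> (k has_derivative k' y) (at y)" and k'S: "\<And>w. smooth_on V (\<lambda>y. k' y w)"
    using smooth_onE[OF k] by blast
  obtain f' where f'D: "\<And>x. x \<in> U \<Longrightarrow> (f has_derivative f' x) (at x)" and f'S: "\<And>v. smooth_on U (\<lambda>x. f' x v)"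
    using smooth_onE[OF f] by blast
  obtain bl where bl: "set bl = (Basis :: 'm set)" "distinct bl"
    using finite_distinct_list[OF finite_Basis] by blast
  define chain where "chain v = map (\<lambda>i. (\<lambda>x. a x * (f' x v \<bullet> i), \<lambda>y. k' y i)) bl" for v
  have chain_smooth: "\<forall>(b, l)\<in>set (chain v). smooth_on U b \<and> smooth_on V l" for v
    using a k'S by (auto simp: chain_def intro!: smooth_on_mult smooth_on_bounded_linear_comp[OF bounded_linear_inner_left f'S])
  have chain_eq: "comp_combination f (chain v) x = a x *\<^sub>R k' (f x) (f' x v)" if "x \<in> U" for x v
    unfolding chain_def
    by (rule comp_combination_basis_expansion[OF bl has_derivative_linear[OF k'D]]) (use fV that in auto)
  show ?case
  proof (rule Cons.prems(1)[of "\<lambda>x v. comp_combination f (chain v) x + a' x v *\<^sub>R k (f x) + h' x v"])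
    fix x assume x: "x \<in> U"
    have "((\<lambda>x. k (f x)) has_derivative (\<lambda>v. k' (f x) (f' x v))) (at x)"
      using has_derivative_compose[OF f'D[OF x] k'D] fV x by (auto simp: o_def)
    then have "(comp_combination f (p # xs) has_derivative
        (\<lambda>v. a x *\<^sub>R k' (f x) (f' x v) + a' x v *\<^sub>R k (f x) + h' x v)) (at x)"
      unfolding p comp_combination_def by (auto intro!: derivative_eq_intros a'D x h'D[unfolded comp_combination_def])
    with x show "(comp_combination f (p # xs) has_derivative
        (\<lambda>v. comp_combination f (chain v) x + a' x v *\<^sub>R k (f x) + h' x v)) (at x)"
      by (simp add: chain_eq)
  next
    fix v
    obtain ys where ys: "(\<lambda>x. h' x v) = comp_combination f ys" "\<forall>(a, k)\<in>set ys. smooth_on U a \<and> smooth_on V k"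
      using h'S by blast
    with chain_smooth[of v] a'S k show "\<exists>ys. (\<lambda>x. comp_combination f (chain v) x + a' x v *\<^sub>R k (f x) + h' x v) =
        comp_combination f ys \<and> (\<forall>(a, k)\<in>set ys. smooth_on U a \<and> smooth_on V k)"
      by (intro exI[of _ "(\<lambda>x. a' x v, k) # chain v @ ys"])
         (auto simp: comp_combination_def fun_eq_iff dest: fun_cong)
  qed
qed

lemma smooth_on_comp_combination:
  fixes f :: "'a::real_normed_vector \<Rightarrow> 'm::euclidean_space"
  assumes "smooth_on U f" "f ` U \<subseteq> V" "\<forall>(a, k)\<in>set xs. smooth_on U a \<and> smooth_on V k"
  shows "smooth_on U (comp_combination f xs)"
  using assms(3)
proof (coinduction arbitrary: xs rule: smooth_on.coinduct)
  case (smooth_on xs)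
  with assms(1,2) obtain h' where "\<And>x. x \<in> U \<Longrightarrow> (comp_combination f xs has_derivative h' x) (at x)"
    "\<And>v. \<exists>ys. (\<lambda>x. h' x v) = comp_combination f ys \<and> (\<forall>(a, k)\<in>set ys. smooth_on U a \<and> smooth_on V k)"
    by (rule comp_combination_has_derivative) blast
  then show ?case by (intro exI[of _ "comp_combination f xs"] exI[of _ h']) auto
qed

lemma smooth_on_compose:
  fixes f :: "'a::real_normed_vector \<Rightarrow> 'm::euclidean_space"
  assumes "smooth_on U f" "smooth_on V g" "f ` U \<subseteq> V"
  shows "smooth_on U (\<lambda>x. g (f x))"
  using smooth_on_comp_combination[of U f V "[(\<lambda>x. 1, g)]"] assms
  by (simp add: comp_combination_def smooth_on_const)

lemma smooth_on_UNIV_if_locally_smooth: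
  assumes "\<And>x. \<exists>S g. open S \<and> x \<in> S \<and> smooth_on UNIV g \<and> (\<forall>y\<in>S. f y = g y)"
  shows "smooth_on UNIV f"
  using assms
proof (coinduction arbitrary: f rule: smooth_on.coinduct)
  case (smooth_on f)
  then obtain S g where S: "\<And>x. open (S x)" "\<And>x. x \<in> S x"
    and g: "\<And>x. smooth_on UNIV (g x)" and fg: "\<And>x y. y \<in> S x \<Longrightarrow> f y = g x y"
    by metis
  have "\<forall>x. \<exists>G. (\<forall>y. (g x has_derivative G y) (at y)) \<and> (\<forall>v. smooth_on UNIV (\<lambda>y. G y v))"
    using smooth_onE[OF g] by (metis UNIV_I)
  then obtain G where G: "\<And>x y. (g x has_derivative G x y) (at y)" "\<And>x v. smooth_on UNIV (\<lambda>y. G x y v)"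
    by metis
  have fD: "(f has_derivative G x y) (at y)" if "y \<in> S x" for x y
    by (rule has_derivative_transform_within_open[OF G(1) S(1) that]) (simp add: fg)
  have "G y y = G x y" if "y \<in> S x" for x y
    using has_derivative_unique[OF fD[OF S(2)] fD[OF that]] .
  then have "\<exists>S g. open S \<and> x \<in> S \<and> smooth_on UNIV g \<and> (\<forall>y\<in>S. G y y v = g y)" for x v
    using S G(2) by (intro exI[of _ "S x"] exI[of _ "\<lambda>y. G x y v"]) simp
  then show ?case
    using fD[OF S(2)] by (intro exI[of _ f] exI[of _ "\<lambda>y. G y y"]) auto
qed

lemma smooth_on_affine_comp:
  fixes c :: "real \<Rightarrow> 'a::real_normed_vector"
  assumes "smooth_on UNIV c"
  shows "smooth_on UNIV (\<lambda>t. c (a * t + b))"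
  by (rule smooth_on_compose[OF _ assms])
     (auto intro: smooth_on_add[OF smooth_on_mult[OF smooth_on_const smooth_on_id] smooth_on_const])

lemma smooth_on_power_int: "smooth_on (- {0}) (\<lambda>x::real. c * power_int x n)"
proof (coinduction arbitrary: c n rule: smooth_on.coinduct)
  case (smooth_on c n)
  have "((\<lambda>x. c * power_int x n) has_derivative (\<lambda>v. (c * of_int n * v) * power_int x (n - 1))) (at x)"
    if "x \<noteq> 0" for x :: real
    using that by (auto intro!: derivative_eq_intros)
  then show ?case
    by (intro exI[of _ "\<lambda>x. c * power_int x n"] exI[of _ "\<lambda>x v. (c * of_int n * v) * power_int x (n - 1)"])
       auto
qed

section \<open>A smooth step function\<close>

text \<open>The classical flat function \<open>exp (-1/t)\<close>, multiplied by a polynomial in \<open>1/t\<close> so that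
  the family is closed under differentiation.\<close>

definition exp_flat :: "real poly \<Rightarrow> real \<Rightarrow> real" where
  "exp_flat p t = (if 0 < t then poly p (inverse t) * exp (- inverse t) else 0)"

definition exp_flat_deriv_poly :: "real poly \<Rightarrow> real poly" where
  "exp_flat_deriv_poly p = [:0, 0, 1:] * (p - pderiv p)"

lemma tendsto_poly_div_exp_at_top: "((\<lambda>x::real. poly p x / exp x) \<longlongrightarrow> 0) at_top"
proof -
  have "((\<lambda>x. \<Sum>i\<le>degree p. coeff p i * (x ^ i / exp x)) \<longlongrightarrow> 0) at_top"
    by (intro tendsto_null_sum tendsto_mult_right_zero tendsto_power_div_exp_0)
  then show ?thesis
    by (simp add: poly_altdef divide_inverse mult.assoc sum_distrib_right)
qed

lemma exp_flat_has_real_derivative_pos: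
  assumes "0 < t"
  shows "((\<lambda>t. poly p (inverse t) * exp (- inverse t)) has_real_derivative
    exp_flat (exp_flat_deriv_poly p) t) (at t)"
  using assms
  by (auto intro!: derivative_eq_intros
      simp: exp_flat_def exp_flat_deriv_poly_def algebra_simps power2_eq_square)

lemma exp_flat_has_real_derivative_0:
  "(exp_flat p has_real_derivative 0) (at 0)"
proof -
  have "((\<lambda>h. exp_flat p h / h) \<longlongrightarrow> 0) (at_left 0)"
    by (rule tendsto_eventually) (auto simp: eventually_at_left_field exp_flat_def intro: exI[of _ "-1::real"])
  moreover have "((\<lambda>h. poly (pCons 0 p) (inverse h) / exp (inverse h)) \<longlongrightarrow> 0) (at_right 0)"
    by (rule filterlim_compose[OF tendsto_poly_div_exp_at_top filterlim_inverse_at_top_right])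
  then have "((\<lambda>h. exp_flat p h / h) \<longlongrightarrow> 0) (at_right 0)"
    by (rule Lim_transform_eventually)
       (use eventually_at_right_less[of "0::real"] in \<open>eventually_elim, simp add: exp_flat_def exp_minus field_simps\<close>)
  ultimately show ?thesis
    by (simp add: DERIV_def exp_flat_def filterlim_at_split)
qed

lemma exp_flat_has_real_derivative:
  "(exp_flat p has_real_derivative exp_flat (exp_flat_deriv_poly p) t) (at t)"
proof -
  consider "0 < t" | "t < 0" | "t = 0" by linarith
  then show ?thesis
  proof cases
    case 1
    then show ?thesis
      by (intro has_field_derivative_transform_within_open[OF exp_flat_has_real_derivative_pos, of _ "{0<..}"])
         (auto simp: exp_flat_def)
  next
    case 2
    then have "((\<lambda>t. 0) has_real_derivative exp_flat (exp_flat_deriv_poly p) t) (at t)"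
      by (simp add: exp_flat_def)
    then show ?thesis
      by (rule has_field_derivative_transform_within_open[where S = "{..<0}"])
         (use 2 in \<open>auto simp: exp_flat_def\<close>)
  next
    case 3
    then show ?thesis
      using exp_flat_has_real_derivative_0 by (simp add: exp_flat_def)
  qed
qed

lemma smooth_on_exp_flat: "smooth_on UNIV (exp_flat p)"
proof (coinduction arbitrary: p rule: smooth_on.coinduct)
  case (smooth_on p)
  have "(\<lambda>t. exp_flat (exp_flat_deriv_poly p) t * v) = exp_flat (smult v (exp_flat_deriv_poly p))" for v
    by (simp add: exp_flat_def fun_eq_iff)
  then show ?case
    using exp_flat_has_real_derivative[unfolded has_field_derivative_def]
    by (intro exI[of _ "exp_flat p"] exI[of _ "\<lambda>t v. exp_flat (exp_flat_deriv_poly p) t * v"])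
       auto
qed

lemma exp_flat_one_pos: "0 < t \<Longrightarrow> 0 < exp_flat 1 t"
  and exp_flat_nonpos: "t \<le> 0 \<Longrightarrow> exp_flat p t = 0"
  and exp_flat_one_nonneg: "0 \<le> exp_flat 1 t"
  by (auto simp: exp_flat_def)

definition smooth_step :: "real \<Rightarrow> real" where
  "smooth_step t = exp_flat 1 t / (exp_flat 1 t + exp_flat 1 (1 - t))"

lemma smooth_step_denominator_pos: "0 < exp_flat 1 t + exp_flat 1 (1 - t)"
  using exp_flat_one_pos[of t] exp_flat_one_pos[of "1 - t"]
    exp_flat_one_nonneg[of t] exp_flat_one_nonneg[of "1 - t"]
  by (cases "0 < t") linarith+

lemma smooth_on_smooth_step: "smooth_on UNIV smooth_step"
proof -
  have "smooth_on UNIV (\<lambda>t. exp_flat 1 ((-1) * t + 1))"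
    by (rule smooth_on_affine_comp[OF smooth_on_exp_flat])
  then have "smooth_on UNIV (\<lambda>t. exp_flat 1 (1 - t))"
    by simp
  then have denominator: "smooth_on UNIV (\<lambda>t. exp_flat 1 t + exp_flat 1 (1 - t))"
    by (rule smooth_on_add[OF smooth_on_exp_flat])
  have "smooth_on UNIV (\<lambda>t. 1 * power_int (exp_flat 1 t + exp_flat 1 (1 - t)) (-1))"
    by (rule smooth_on_compose[OF denominator smooth_on_power_int])
       (use smooth_step_denominator_pos in \<open>auto simp: less_le\<close>)
  then show ?thesis
    unfolding smooth_step_def[abs_def] divide_inverse
    by (auto intro: smooth_on_mult[OF smooth_on_exp_flat])
qed

lemma smooth_step_eq_0: "t \<le> 0 \<Longrightarrow> smooth_step t = 0"
  and smooth_step_eq_1: "1 \<le> t \<Longrightarrow> smooth_step t = 1"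
  using exp_flat_one_pos[of t] by (auto simp: smooth_step_def exp_flat_nonpos)

lemma smooth_step_nonneg: "0 \<le> smooth_step t"
  and smooth_step_le_1: "smooth_step t \<le> 1"
  using smooth_step_denominator_pos[of t] exp_flat_one_nonneg[of t] exp_flat_one_nonneg[of "1 - t"]
  by (auto simp: smooth_step_def field_simps)

section \<open>Smooth paths in a connected submanifold\<close>

text \<open>Joining paths are constant outside \<open>[0, 1]\<close>, so that concatenations and reparametrisations
  of them remain smooth without any matching of derivatives.\<close>

definition smoothly_joinable :: "'a::real_normed_vector set \<Rightarrow> 'a \<Rightarrow> 'a \<Rightarrow> bool" where
  "smoothly_joinable N p q \<longleftrightarrow>
     (\<exists>c :: real \<Rightarrow> 'a. smooth_on UNIV c \<and> range c \<subseteq> N \<and> (\<forall>t\<le>0. c t = p) \<and> (\<forall>t\<ge>1. c t = q))"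

lemma smoothly_joinable_sym:
  assumes "smoothly_joinable N p q"
  shows "smoothly_joinable N q p"
proof -
  obtain c :: "real \<Rightarrow> 'a" where c: "smooth_on UNIV c" "range c \<subseteq> N" "\<forall>t\<le>0. c t = p" "\<forall>t\<ge>1. c t = q"
    using assms unfolding smoothly_joinable_def by blast
  have "smooth_on UNIV (\<lambda>t. c ((-1) * t + 1))"
    by (rule smooth_on_affine_comp[OF c(1)])
  with c(2-4) show ?thesis
    unfolding smoothly_joinable_def by (intro exI[of _ "\<lambda>t. c ((-1) * t + 1)"]) auto
qed

lemma smoothly_joinable_trans:
  assumes "smoothly_joinable N p q" "smoothly_joinable N q r"
  shows "smoothly_joinable N p r"
proof -
  obtain c1 :: "real \<Rightarrow> 'a" where c1: "smooth_on UNIV c1" "range c1 \<subseteq> N" "\<forall>t\<le>0. c1 t = p" "\<forall>t\<ge>1. c1 t = q"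
    using assms(1) unfolding smoothly_joinable_def by blast
  obtain c2 :: "real \<Rightarrow> 'a" where c2: "smooth_on UNIV c2" "range c2 \<subseteq> N" "\<forall>t\<le>0. c2 t = q" "\<forall>t\<ge>1. c2 t = r"
    using assms(2) unfolding smoothly_joinable_def by blast
  text \<open>On \<open>t \<le> 1/2\<close> the second summand is \<open>q\<close>, on \<open>t \<ge> 1/2\<close> the first one is.\<close>
  define c where "c t = c1 (3 * t + 0) + c2 (3 * t + (-2)) - q" for t
  have c_eq: "c t = (if t \<le> 1/2 then c1 (3 * t) else c2 (3 * t - 2))" for t
    using c1(4) c2(3) by (auto simp: c_def)
  have "smooth_on UNIV c"
    unfolding c_def[abs_def]
    by (intro smooth_on_diff smooth_on_add smooth_on_const smooth_on_affine_comp[OF c1(1)]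
        smooth_on_affine_comp[OF c2(1)])
  moreover have "range c \<subseteq> N"
    using c1(2) c2(2) by (auto simp: c_eq)
  moreover have "c t = p" if "t \<le> 0" for t
    using that c1(3) by (simp add: c_eq)
  moreover have "c t = r" if "t \<ge> 1" for t
    using that c2(4) by (simp add: c_eq)
  ultimately show ?thesis
    unfolding smoothly_joinable_def by (intro exI[of _ c]) simp
qed

lemma smoothly_joinable_image_convex:
  fixes \<psi> :: "'m::euclidean_space \<Rightarrow> 'a::real_normed_vector"
  assumes "smooth_on V \<psi>" "convex C" "C \<subseteq> V" "\<psi> ` C \<subseteq> N" "x \<in> C" "y \<in> C"
  shows "smoothly_joinable N (\<psi> x) (\<psi> y)"
proof -
  define l where "l t = (1 - smooth_step t) *\<^sub>R x + smooth_step t *\<^sub>R y" for t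
  have l_in: "l t \<in> C" for t
    unfolding l_def by (rule convexD_alt[OF assms(2,5,6) smooth_step_nonneg smooth_step_le_1])
  have "smooth_on UNIV l"
    unfolding l_def[abs_def]
    by (intro smooth_on_add smooth_on_scaleR smooth_on_diff smooth_on_const smooth_on_smooth_step)
  then have "smooth_on UNIV (\<lambda>t. \<psi> (l t))"
    by (rule smooth_on_compose[OF _ assms(1)]) (use l_in assms(3) in auto)
  then show ?thesis
    unfolding smoothly_joinable_def using l_in assms(4)
    by (intro exI[of _ "\<lambda>t. \<psi> (l t)"]) (auto simp: l_def smooth_step_eq_0 smooth_step_eq_1)
qed

lemma smooth_submanifold_locally_joinable:
  fixes N :: "'a::euclidean_space set"
  assumes "smooth_submanifold N" "p \<in> N"
  obtains T where "openin (top_of_set N) T" "p \<in> T" "\<And>q. q \<in> T \<Longrightarrow> smoothly_joinable N p q"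
proof -
  obtain U V L :: "'a set" and \<phi> \<psi> :: "'a \<Rightarrow> 'a" where U: "open U" "p \<in> U" and V: "open V"
    and \<phi>: "smooth_on U \<phi>" and \<psi>: "smooth_on V \<psi>" and \<phi>U: "\<phi> ` U = V" and \<psi>\<phi>: "\<forall>x\<in>U. \<psi> (\<phi> x) = x"
    and L: "subspace L" and slice: "\<phi> ` (N \<inter> U) = L \<inter> V"
    using assms unfolding smooth_submanifold_def by metis
  obtain r where r: "0 < r" "ball (\<phi> p) r \<subseteq> V"
    using V \<phi>U U(2) open_contains_ball by blast
  define C where "C = L \<inter> ball (\<phi> p) r"
  have "convex C"
    unfolding C_def by (intro convex_Int subspace_imp_convex[OF L] convex_ball)
  moreover have "C \<subseteq> V"
    using r(2) by (auto simp: C_def)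
  moreover have "\<psi> ` C \<subseteq> N"
  proof
    fix y assume "y \<in> \<psi> ` C"
    then obtain x where "x \<in> N \<inter> U" "y = \<psi> (\<phi> x)"
      using slice r(2) by (force simp: C_def)
    then show "y \<in> N"
      using \<psi>\<phi> by simp
  qed
  moreover have "\<phi> q \<in> C" if "q \<in> N \<inter> (U \<inter> \<phi> -` ball (\<phi> p) r)" for q
    using that slice by (auto simp: C_def)
  ultimately have "smoothly_joinable N (\<psi> (\<phi> p)) (\<psi> (\<phi> q))" if "q \<in> N \<inter> (U \<inter> \<phi> -` ball (\<phi> p) r)" for q
    using that assms(2) U(2) r(1) by (intro smoothly_joinable_image_convex[OF \<psi>]) auto
  then have "smoothly_joinable N p q" if "q \<in> N \<inter> (U \<inter> \<phi> -` ball (\<phi> p) r)" for q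
    using that U(2) \<psi>\<phi> by auto
  moreover have "open (U \<inter> \<phi> -` ball (\<phi> p) r)"
    by (rule continuous_open_preimage[OF smooth_on_imp_continuous_on[OF \<phi>] U(1) open_ball])
  ultimately show thesis
    using that assms(2) U(2) r(1) by (meson IntI centre_in_ball openin_open_Int vimageI2)
qed

lemma smoothly_joinable_if_connected_submanifold:
  fixes N :: "'a::euclidean_space set"
  assumes "smooth_submanifold N" "connected N" "p \<in> N" "q \<in> N"
  shows "smoothly_joinable N p q"
  using assms(2-4) smoothly_joinable_sym smoothly_joinable_trans
proof (rule connected_equivalence_relation)
  fix x assume "x \<in> N"
  then show "\<exists>T. openin (top_of_set N) T \<and> x \<in> T \<and> (\<forall>y\<in>T. smoothly_joinable N x y)"
    using smooth_submanifold_locally_joinable[OF assms(1)] by metis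
qed

section \<open>The \<open>L\<^sup>2\<close> distance\<close>

lemma square_integrable_if_continuous:
  fixes f :: "real \<Rightarrow> 'a::euclidean_space"
  assumes "continuous_on UNIV f"
  shows "square_integrable f"
  unfolding square_integrable_def
proof
  show "f \<in> borel_measurable lborel"
    using borel_measurable_continuous_onI[OF assms] by simp
  show "set_integrable lborel {0..1} (\<lambda>t. (norm (f t))\<^sup>2)"
    by (rule borel_integrable_atLeastAtMost')
       (intro continuous_intros continuous_on_subset[OF assms]; simp)
qed

lemma square_sum_le: "(a + b)\<^sup>2 \<le> 2 * a\<^sup>2 + 2 * (b::real)\<^sup>2"
  using sum_squares_bound[of a b] by (simp add: power2_sum)

lemma norm_diff_square_le: "(norm (x - z))\<^sup>2 \<le> 2 * (norm (x - y))\<^sup>2 + 2 * (norm (y - z))\<^sup>2"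
proof -
  have "(norm (x - z))\<^sup>2 \<le> (norm (x - y) + norm (y - z))\<^sup>2"
    by (intro power_mono norm_diff_triangle_le) auto
  also have "\<dots> \<le> 2 * (norm (x - y))\<^sup>2 + 2 * (norm (y - z))\<^sup>2"
    by (rule square_sum_le)
  finally show ?thesis .
qed

lemma set_integrable_norm_diff_square:
  fixes f g :: "real \<Rightarrow> 'a::euclidean_space"
  assumes f: "square_integrable f" and g: "square_integrable g"
  shows "set_integrable lborel {0..1} (\<lambda>t. (norm (f t - g t))\<^sup>2)"
proof -
  have majorant: "set_integrable lborel {0..1} (\<lambda>t. 2 * (norm (f t))\<^sup>2 + 2 * (norm (g t))\<^sup>2)"
    using f g by (auto simp: square_integrable_def intro!: set_integral_add set_integrable_mult_right)
  have "(\<lambda>t. f t - g t) \<in> borel_measurable lborel"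
    using f g by (auto simp: square_integrable_def intro: borel_measurable_diff)
  then have measurable: "(\<lambda>t. indicator {0..1} t *\<^sub>R (norm (f t - g t))\<^sup>2) \<in> borel_measurable lborel"
    by measurable
  have "(norm (f t - g t))\<^sup>2 \<le> 2 * (norm (f t))\<^sup>2 + 2 * (norm (g t))\<^sup>2" for t
    using norm_diff_square_le[where x = "f t" and y = 0 and z = "g t"] by simp
  then show ?thesis
    unfolding set_integrable_def
    by (intro Bochner_Integration.integrable_bound[OF majorant[unfolded set_integrable_def] measurable])
       (auto intro!: AE_I2 simp: indicator_def)
qed

lemma L2_dist_integral_nonneg:
  fixes f g :: "real \<Rightarrow> 'a::euclidean_space"
  shows "0 \<le> (LINT t:{0..1}|lborel. (norm (f t - g t))\<^sup>2)"
  unfolding set_lebesgue_integral_def by (rule integral_nonneg_AE) (simp add: indicator_def)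

lemma L2_dist_nonneg: "0 \<le> L2_dist f g"
  using L2_dist_integral_nonneg by (simp add: L2_dist_def)

lemma L2_dist_self: "L2_dist f f = 0"
  by (simp add: L2_dist_def)

lemma L2_dist_square: "(L2_dist f g)\<^sup>2 = (LINT t:{0..1}|lborel. (norm (f t - g t))\<^sup>2)"
  using L2_dist_integral_nonneg by (simp add: L2_dist_def)

lemma L2_dist_square_triangle:
  fixes f g h :: "real \<Rightarrow> 'a::euclidean_space"
  assumes f: "square_integrable f" and g: "square_integrable g" and h: "square_integrable h"
  shows "(L2_dist f h)\<^sup>2 \<le> 2 * (L2_dist f g)\<^sup>2 + 2 * (L2_dist g h)\<^sup>2"
proof -
  have fg: "set_integrable lborel {0..1} (\<lambda>t. (norm (f t - g t))\<^sup>2)"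
    and gh: "set_integrable lborel {0..1} (\<lambda>t. (norm (g t - h t))\<^sup>2)"
    and fh: "set_integrable lborel {0..1} (\<lambda>t. (norm (f t - h t))\<^sup>2)"
    using f g h by (auto intro: set_integrable_norm_diff_square)
  have "(LINT t:{0..1}|lborel. (norm (f t - h t))\<^sup>2) \<le>
      (LINT t:{0..1}|lborel. 2 * (norm (f t - g t))\<^sup>2 + 2 * (norm (g t - h t))\<^sup>2)"
    using fg gh
    by (intro set_integral_mono[OF fh] set_integral_add set_integrable_mult_right norm_diff_square_le)
  also have "\<dots> = 2 * (LINT t:{0..1}|lborel. (norm (f t - g t))\<^sup>2) + 2 * (LINT t:{0..1}|lborel. (norm (g t - h t))\<^sup>2)"
    using fg gh by (simp add: set_integral_add set_integrable_mult_right set_integral_mult_right)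
  finally show ?thesis
    by (simp add: L2_dist_square)
qed

lemma L2_dist_square_le_if_eq_outside:
  fixes f g :: "real \<Rightarrow> 'a::euclidean_space"
  assumes f: "square_integrable f" and g: "square_integrable g"
    and B: "B \<in> sets lborel" "emeasure lborel B < \<infinity>"
    and bound: "\<And>t. t \<in> {0..1} \<Longrightarrow> norm (f t - g t) \<le> K"
    and eq: "\<And>t. t \<in> {0..1} - B \<Longrightarrow> f t = g t"
  shows "(L2_dist f g)\<^sup>2 \<le> K\<^sup>2 * measure lborel B"
proof -
  have "indicator {0..1} t *\<^sub>R (norm (f t - g t))\<^sup>2 \<le> K\<^sup>2 * indicator B t" for t
    using bound[of t] eq[of t] norm_ge_zero[of "f t - g t"]
    by (cases "t \<in> {0..1}"; cases "t \<in> B") (auto simp: indicator_def intro: power_mono)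
  then have "(LINT t|lborel. indicator {0..1} t *\<^sub>R (norm (f t - g t))\<^sup>2) \<le> (LINT t|lborel. K\<^sup>2 * indicator B t)"
    using set_integrable_norm_diff_square[OF f g] B
    by (intro integral_mono) (auto simp: set_integrable_def)
  then show ?thesis
    by (simp add: L2_dist_square set_lebesgue_integral_def)
qed

lemma L2_dist_le_if_norm_le:
  fixes f g :: "real \<Rightarrow> 'a::euclidean_space"
  assumes "square_integrable f" "square_integrable g" "0 \<le> K"
    and "\<And>t. t \<in> {0..1} \<Longrightarrow> norm (f t - g t) \<le> K"
  shows "L2_dist f g \<le> K"
proof -
  have "(L2_dist f g)\<^sup>2 \<le> K\<^sup>2"
    using L2_dist_square_le_if_eq_outside[of f g "{0..1}" K] assms by simp
  then show ?thesis
    using assms(3) by (simp add: power2_le_iff_abs_le)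
qed

lemma L2_dist_square_le_if_eq_inside:
  fixes f g :: "real \<Rightarrow> 'a::euclidean_space"
  assumes "square_integrable f" "square_integrable g" "0 \<le> a"
    and "\<And>t. t \<in> {0..1} \<Longrightarrow> norm (f t - g t) \<le> K"
    and "\<And>t. t \<in> {a..1 - a} \<Longrightarrow> f t = g t"
  shows "(L2_dist f g)\<^sup>2 \<le> K\<^sup>2 * (2 * a)"
proof -
  have "(L2_dist f g)\<^sup>2 \<le> K\<^sup>2 * measure lborel ({0..a} \<union> {1 - a..1})"
    using assms by (intro L2_dist_square_le_if_eq_outside emeasure_bounded_finite) auto
  also have "\<dots> \<le> K\<^sup>2 * (2 * a)"
    using measure_Un_le[of "{0..a}" lborel "{1 - a..1}"] assms(3) by (intro mult_left_mono) auto
  finally show ?thesis .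
qed

lemma L2_closure_subset:
  fixes S T :: "(real \<Rightarrow> 'a::euclidean_space) set"
  assumes "\<And>g. g \<in> S \<Longrightarrow> square_integrable g" "\<And>h. h \<in> T \<Longrightarrow> square_integrable h"
    and approx: "\<And>g e. g \<in> S \<Longrightarrow> 0 < e \<Longrightarrow> \<exists>h\<in>T. L2_dist g h < e"
  shows "L2_closure S \<subseteq> L2_closure T"
proof
  fix f assume "f \<in> L2_closure S"
  then have f: "square_integrable f" and f_approx: "\<And>e. 0 < e \<Longrightarrow> \<exists>g\<in>S. L2_dist f g < e"
    by (auto simp: L2_closure_def)
  have "\<exists>h\<in>T. L2_dist f h < e" if "0 < e" for e
  proof -
    obtain g where g: "g \<in> S" "L2_dist f g < e/2"
      using f_approx \<open>0 < e\<close> by (meson half_gt_zero)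
    obtain h where h: "h \<in> T" "L2_dist g h < e/2"
      using approx[OF g(1)] \<open>0 < e\<close> by (meson half_gt_zero)
    have "(L2_dist f h)\<^sup>2 \<le> 2 * (L2_dist f g)\<^sup>2 + 2 * (L2_dist g h)\<^sup>2"
      using f g h assms(1,2) by (intro L2_dist_square_triangle)
    also have "\<dots> < 2 * (e/2)\<^sup>2 + 2 * (e/2)\<^sup>2"
      using g(2) h(2) L2_dist_nonneg[of f g] L2_dist_nonneg[of g h]
      by (intro add_strict_mono mult_strict_left_mono power_strict_mono) auto
    also have "\<dots> = e\<^sup>2"
      by (simp add: power2_eq_square)
    finally have "L2_dist f h < e"
      using \<open>0 < e\<close> by (simp add: power_less_imp_less_base)
    with h(1) show ?thesis by blast
  qed
  with f show "f \<in> L2_closure T"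
    by (simp add: L2_closure_def)
qed

section \<open>Smooth loops\<close>

lemma periodic_add_of_int:
  fixes \<gamma> :: "real \<Rightarrow> 'a"
  assumes periodic: "\<And>t. \<gamma> (t + 1) = \<gamma> t"
  shows "\<gamma> (t + of_int k) = \<gamma> t"
proof -
  have nat: "\<gamma> (t + real n) = \<gamma> t" for t n
    by (induction n) (use periodic[of "t + real n" for n] in \<open>simp_all add: algebra_simps\<close>)
  show ?thesis
    using nat[of t "nat k"] nat[of "t + of_int k" "nat (- k)"] by (cases "0 \<le> k") auto
qed

lemma periodic_frac:
  fixes \<gamma> :: "real \<Rightarrow> 'a"
  assumes "\<And>t. \<gamma> (t + 1) = \<gamma> t"
  shows "\<gamma> (frac t) = \<gamma> t"
  using periodic_add_of_int[where \<gamma> = \<gamma>, OF assms, of "frac t" "\<lfloor>t\<rfloor>"] by (simp add: frac_def)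

lemma frac_in_unit_interval: "frac t \<in> {0..1}"
  using frac_lt_1[of t] by auto

lemma bounded_range_if_range_subset_image:
  assumes "continuous_on {0..1} c" "range c \<subseteq> c ` {0..1::real}"
  shows "bounded (range c)"
  using compact_continuous_image[OF assms(1) compact_Icc] assms(2)
  by (meson bounded_subset compact_imp_bounded)

lemma smooth_on_periodic_extension:
  fixes B :: "real \<Rightarrow> 'a::real_normed_vector"
  assumes B: "smooth_on UNIV B" and \<eta>: "0 < \<eta>" "\<eta> \<le> 1/2"
    and B_start: "\<And>x. x \<le> \<eta> \<Longrightarrow> B x = b" and B_end: "\<And>x. 1 - \<eta> \<le> x \<Longrightarrow> B x = b"
  shows "smooth_on UNIV (\<lambda>t. B (frac t))"
proof (rule smooth_on_UNIV_if_locally_smooth)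
  fix t :: real
  show "\<exists>S g. open S \<and> t \<in> S \<and> smooth_on UNIV g \<and> (\<forall>y\<in>S. B (frac y) = g y)"
  proof (cases "t \<in> \<int>")
    case True
    then obtain k where k: "t = of_int k" by (auto elim: Ints_cases)
    text \<open>Around an integer, \<open>frac\<close> jumps from near \<open>1\<close> to near \<open>0\<close>, where \<open>B\<close> is constant.\<close>
    have "B (frac y) = b" if y: "y \<in> {t - \<eta><..<t + \<eta>}" for y
    proof (cases "t \<le> y")
      case True
      then have "\<lfloor>y\<rfloor> = k" using y \<eta> k by (intro floor_unique) auto
      then show ?thesis using y k by (intro B_start) (simp add: frac_def)
    next
      case False
      then have "\<lfloor>y\<rfloor> = k - 1" using y \<eta> k by (intro floor_unique) auto
      then show ?thesis using y k by (intro B_end) (simp add: frac_def)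
    qed
    then show ?thesis
      using \<eta> by (intro exI[of _ "{t - \<eta><..<t + \<eta>}"] exI[of _ "\<lambda>y. b"]) (auto simp: smooth_on_const)
  next
    case False
    define k where "k = \<lfloor>t\<rfloor>"
    have "of_int k < t"
      using False by (metis Ints_of_int floor_correct k_def order_le_less)
    then have t: "t \<in> {of_int k<..<of_int k + 1}"
      using floor_correct[of t] by (auto simp: k_def)
    have "B (frac y) = B (y - of_int k)" if "y \<in> {of_int k<..<of_int k + 1}" for y
    proof -
      have "\<lfloor>y\<rfloor> = k" using that by (intro floor_unique) auto
      then show ?thesis by (simp add: frac_def)
    qed
    moreover have "smooth_on UNIV (\<lambda>y. B (y - of_int k))"
      using smooth_on_affine_comp[OF B, of 1 "- of_int k"] by simp
    ultimately show ?thesis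
      using t by (intro exI[of _ "{of_int k<..<of_int k + 1}"] exI[of _ "\<lambda>y. B (y - of_int k)"]) auto
  qed
qed

lemma smooth_loopsD:
  assumes "\<gamma> \<in> smooth_loops N"
  shows "smooth_on UNIV \<gamma>" "\<And>t. \<gamma> (t + 1) = \<gamma> t" "range \<gamma> \<subseteq> N"
  using assms by (auto simp: smooth_loops_def)

lemma smooth_loop_square_integrable:
  fixes \<gamma> :: "real \<Rightarrow> 'a::euclidean_space"
  shows "\<gamma> \<in> smooth_loops N \<Longrightarrow> square_integrable \<gamma>"
  by (intro square_integrable_if_continuous smooth_on_imp_continuous_on smooth_loopsD(1))

lemma smooth_loop_bounded:
  assumes "\<gamma> \<in> smooth_loops N"
  shows "bounded (range \<gamma>)"
proof (rule bounded_range_if_range_subset_image)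
  show "continuous_on {0..1} \<gamma>"
    using smooth_on_imp_continuous_on[OF smooth_loopsD(1)[OF assms]] continuous_on_subset by blast
  show "range \<gamma> \<subseteq> \<gamma> ` {0..1}"
    using periodic_frac[where \<gamma> = \<gamma>, OF smooth_loopsD(2)[OF assms]] frac_in_unit_interval by (metis image_eqI image_subsetI)
qed

lemma smooth_loop_in_L2_loops:
  fixes \<gamma> :: "real \<Rightarrow> 'a::euclidean_space"
  assumes "\<gamma> \<in> smooth_loops N"
  shows "\<gamma> \<in> L2_loops N"
  using assms smooth_loop_square_integrable[OF assms] L2_dist_self[of \<gamma>]
  by (auto simp: L2_loops_def L2_closure_def intro!: bexI[of _ \<gamma>])

section \<open>Pinched loops\<close>

definition pinch :: "real \<Rightarrow> real \<Rightarrow> real" where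
  "pinch s x = x * smooth_step (2 / s * x - 1) * (1 - smooth_step (2 / s * x + (2 - 2 / s)))"

lemma pinch_eq_0_left:
  assumes "0 < s" "x \<le> s / 2"
  shows "pinch s x = 0"
proof -
  have "2 / s * x - 1 \<le> 0"
    using assms by (simp add: field_simps)
  then show ?thesis
    by (simp add: pinch_def smooth_step_eq_0)
qed

lemma pinch_eq_0_right:
  assumes "0 < s" "1 - s / 2 \<le> x"
  shows "pinch s x = 0"
proof -
  have "1 \<le> 2 / s * x + (2 - 2 / s)"
    using assms by (simp add: field_simps)
  then show ?thesis
    by (simp add: pinch_def smooth_step_eq_1)
qed

lemma pinch_eq_id:
  assumes "0 < s" "s \<le> x" "x \<le> 1 - s"
  shows "pinch s x = x"
proof -
  have "1 \<le> 2 / s * x - 1" "2 / s * x + (2 - 2 / s) \<le> 0"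
    using assms by (simp_all add: field_simps)
  then show ?thesis
    by (simp add: pinch_def smooth_step_eq_0 smooth_step_eq_1)
qed

lemma pinch_one: "pinch 1 x = 0"
  by (cases "x \<le> 1/2") (auto intro: pinch_eq_0_left pinch_eq_0_right)

lemma smooth_on_pinch: "smooth_on UNIV (pinch s)"
proof -
  have "smooth_on UNIV (\<lambda>x. smooth_step (2 / s * x + - 1))"
    by (rule smooth_on_affine_comp[OF smooth_on_smooth_step])
  moreover have "smooth_on UNIV (\<lambda>x. smooth_step (2 / s * x + (2 - 2 / s)))"
    by (rule smooth_on_affine_comp[OF smooth_on_smooth_step])
  ultimately show ?thesis
    unfolding pinch_def[abs_def] by (auto intro!: smooth_on_mult smooth_on_diff smooth_on_id smooth_on_const)
qed

lemma continuous_on_pinch: "continuous_on ({0<..} \<times> UNIV) (\<lambda>z. pinch (fst z) (snd z))"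
  unfolding pinch_def
  by (intro continuous_intros continuous_on_compose2[OF smooth_on_imp_continuous_on[OF smooth_on_smooth_step]])
     auto

definition pinched_loop :: "(real \<Rightarrow> 'a) \<Rightarrow> real \<Rightarrow> real \<Rightarrow> 'a" where
  "pinched_loop \<gamma> s = (\<lambda>t. \<gamma> (pinch s (frac t)))"

lemma pinched_loop_in_smooth_loops:
  assumes \<gamma>: "\<gamma> \<in> smooth_loops N" and "0 < s"
  shows "pinched_loop \<gamma> s \<in> smooth_loops N"
proof -
  have "smooth_on UNIV (\<lambda>x. \<gamma> (pinch s x))"
    using smooth_on_compose[OF smooth_on_pinch smooth_loopsD(1)[OF \<gamma>]] by simp
  then have "smooth_on UNIV (pinched_loop \<gamma> s)"
    unfolding pinched_loop_def
    by (rule smooth_on_periodic_extension[where \<eta> = "min (s/2) (1/2)" and b = "\<gamma> 0"])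
       (use \<open>0 < s\<close> in \<open>auto simp: pinch_eq_0_left pinch_eq_0_right\<close>)
  then show ?thesis
    using smooth_loopsD(3)[OF \<gamma>] by (auto simp: smooth_loops_def pinched_loop_def frac_1_eq)
qed

lemma pinched_loop_eq_inside:
  "0 < s \<Longrightarrow> t \<in> {s..1 - s} \<Longrightarrow> pinched_loop \<gamma> s t = \<gamma> t"
  by (simp add: pinched_loop_def pinch_eq_id)

lemma pinched_loop_one: "pinched_loop \<gamma> 1 = (\<lambda>t. \<gamma> 0)"
  by (simp add: pinched_loop_def pinch_one)

lemma L2_dist_less_if_eq_inside:
  fixes f g :: "real \<Rightarrow> 'a::euclidean_space"
  assumes "square_integrable f" "square_integrable g" "\<And>t. norm (f t) \<le> M" "\<And>t. norm (g t) \<le> M"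
    and "\<And>t. t \<in> {s..1 - s} \<Longrightarrow> f t = g t"
    and "0 < e" "0 \<le> s" "s < e\<^sup>2 / (8 * M\<^sup>2 + 1)"
  shows "L2_dist f g < e"
proof -
  have "norm (f t - g t) \<le> 2 * M" for t
    using norm_triangle_ineq4[of "f t" "g t"] assms(3,4)[of t] by linarith
  then have "(L2_dist f g)\<^sup>2 \<le> (2 * M)\<^sup>2 * (2 * s)"
    using assms by (intro L2_dist_square_le_if_eq_inside) auto
  also have "\<dots> \<le> (8 * M\<^sup>2 + 1) * s"
    using \<open>0 \<le> s\<close> by (simp add: power2_eq_square algebra_simps)
  also have "\<dots> < e\<^sup>2"
  proof -
    have "0 < 8 * M\<^sup>2 + 1"
      by (simp add: add_nonneg_pos)
    then show ?thesis
      using assms(8) by (simp add: pos_less_divide_eq mult.commute)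
  qed
  finally show ?thesis
    using \<open>0 < e\<close> by (simp add: power_less_imp_less_base)
qed

lemma smooth_loop_norm_bound:
  assumes "\<gamma> \<in> smooth_loops N"
  obtains M where "\<And>t. norm (\<gamma> t) \<le> M"
  using smooth_loop_bounded[OF assms] unfolding bounded_iff by blast

lemma pinched_loop_L2_tendsto_loop:
  fixes \<gamma> :: "real \<Rightarrow> 'a::euclidean_space"
  assumes \<gamma>: "\<gamma> \<in> smooth_loops N" and "0 < e"
  obtains d where "0 < d" "\<And>s. 0 < s \<Longrightarrow> s < d \<Longrightarrow> L2_dist (pinched_loop \<gamma> s) \<gamma> < e"
proof -
  obtain M where M: "\<And>t. norm (\<gamma> t) \<le> M"
    using smooth_loop_norm_bound[OF \<gamma>] by blast
  show thesis
  proof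
    show "0 < e\<^sup>2 / (8 * M\<^sup>2 + 1)"
      using \<open>0 < e\<close> by (simp add: add_nonneg_pos)
    fix s assume s: "0 < s" "s < e\<^sup>2 / (8 * M\<^sup>2 + 1)"
    have "norm (pinched_loop \<gamma> s t) \<le> M" for t
      using M by (simp add: pinched_loop_def)
    with s \<gamma> M \<open>0 < e\<close> show "L2_dist (pinched_loop \<gamma> s) \<gamma> < e"
      by (intro L2_dist_less_if_eq_inside smooth_loop_square_integrable pinched_loop_in_smooth_loops
          pinched_loop_eq_inside) auto
  qed
qed

lemma pinched_loop_L2_continuous:
  fixes \<gamma> :: "real \<Rightarrow> 'a::euclidean_space"
  assumes \<gamma>: "\<gamma> \<in> smooth_loops N" and s: "0 < s" and e: "0 < e"
  obtains d where "0 < d" "\<And>s'. \<bar>s' - s\<bar> < d \<Longrightarrow> L2_dist (pinched_loop \<gamma> s') (pinched_loop \<gamma> s) < e"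
proof -
  define K where "K = {s/2..3/2 * s} \<times> {0..1::real}"
  define \<Phi> where "\<Phi> z = \<gamma> (pinch (fst z) (snd z))" for z
  have "continuous_on K \<Phi>"
    unfolding \<Phi>_def using s
    by (intro continuous_on_compose2[OF smooth_on_imp_continuous_on[OF smooth_loopsD(1)[OF \<gamma>]]
          continuous_on_subset[OF continuous_on_pinch]]) (auto simp: K_def)
  then have "uniformly_continuous_on K \<Phi>"
    by (rule compact_uniformly_continuous) (simp add: K_def compact_Times)
  moreover have "0 < e/2"
    using e by simp
  ultimately obtain d0 where d0: "0 < d0" "\<And>z z'. z \<in> K \<Longrightarrow> z' \<in> K \<Longrightarrow> dist z' z < d0 \<Longrightarrow> dist (\<Phi> z') (\<Phi> z) < e/2"
    unfolding uniformly_continuous_on_def by metis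
  show thesis
  proof
    show "0 < min d0 (s/2)"
      using d0(1) s by simp
    fix s' assume s': "\<bar>s' - s\<bar> < min d0 (s/2)"
    have s'_near: "\<bar>s' - s\<bar> < d0" "s/2 < s'" "s' < 3/2 * s"
      using s' abs_ge_self[of "s' - s"] abs_ge_minus_self[of "s' - s"]
        min.cobounded1[of d0 "s/2"] min.cobounded2[of d0 "s/2"] by linarith+
    have "dist (pinched_loop \<gamma> s' t) (pinched_loop \<gamma> s t) < e/2" for t
    proof -
      have "(s', frac t) \<in> K" "(s, frac t) \<in> K" "dist (s', frac t) (s, frac t) < d0"
        using s s'_near frac_in_unit_interval[of t] by (auto simp: K_def dist_Pair_Pair dist_real_def)
      then show ?thesis
        using d0(2)[of "(s, frac t)" "(s', frac t)"] by (simp add: \<Phi>_def pinched_loop_def)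
    qed
    moreover have "0 < s'"
      using s s'_near by auto
    ultimately have "L2_dist (pinched_loop \<gamma> s') (pinched_loop \<gamma> s) \<le> e/2"
      using \<gamma> s e
      by (intro L2_dist_le_if_norm_le smooth_loop_square_integrable pinched_loop_in_smooth_loops)
         (auto simp: dist_norm less_imp_le)
    with e show "L2_dist (pinched_loop \<gamma> s') (pinched_loop \<gamma> s) < e"
      by simp
  qed
qed

lemma smooth_loop_L2_path_to_constant:
  fixes \<gamma> :: "real \<Rightarrow> 'a::euclidean_space"
  assumes \<gamma>: "\<gamma> \<in> smooth_loops N"
  shows "L2_path_connects N (\<lambda>s. if s = 0 then \<gamma> else pinched_loop \<gamma> s) \<gamma> (\<lambda>t. \<gamma> 0)"
    (is "L2_path_connects N ?p \<gamma> _")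
proof -
  have "?p s \<in> L2_loops N" if "s \<in> {0..1}" for s
    using that \<gamma> by (auto intro!: smooth_loop_in_L2_loops pinched_loop_in_smooth_loops)
  moreover have "\<exists>d>0. \<forall>s'\<in>{0..1}. \<bar>s' - s\<bar> < d \<longrightarrow> L2_dist (?p s') (?p s) < e"
    if "s \<in> {0..1}" "0 < e" for s e
  proof (cases "s = 0")
    case True
    obtain d where "0 < d" "\<And>s'. 0 < s' \<Longrightarrow> s' < d \<Longrightarrow> L2_dist (pinched_loop \<gamma> s') \<gamma> < e"
      using pinched_loop_L2_tendsto_loop[OF \<gamma> \<open>0 < e\<close>] by blast
    with True \<open>0 < e\<close> show ?thesis
      by (intro exI[of _ d]) (simp add: L2_dist_self)
  next
    case False
    with that have "0 < s" by simp
    obtain d where "0 < d" "\<And>s'. \<bar>s' - s\<bar> < d \<Longrightarrow> L2_dist (pinched_loop \<gamma> s') (pinched_loop \<gamma> s) < e"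
      using pinched_loop_L2_continuous[OF \<gamma> \<open>0 < s\<close> \<open>0 < e\<close>] by blast
    with \<open>0 < s\<close> show ?thesis
      by (intro exI[of _ "min d s"]) (simp add: abs_less_iff)
  qed
  ultimately show ?thesis
    by (simp add: L2_path_connects_def pinched_loop_one)
qed

section \<open>Based loops\<close>

text \<open>Run along \<open>c\<close> from \<open>0\<close> to \<open>\<gamma> 0\<close>, then along the pinched loop, then back along \<open>c\<close>.
  Written as a sum, so that smoothness is immediate: on each of the three pieces the other two
  summands equal \<open>\<gamma> 0\<close>.\<close>

definition based_loop_profile :: "(real \<Rightarrow> 'a::real_normed_vector) \<Rightarrow> (real \<Rightarrow> 'a) \<Rightarrow> real \<Rightarrow> real \<Rightarrow> 'a" where
  "based_loop_profile c \<gamma> s x =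
     c (8/s * x + - 1) + \<gamma> (pinch s x) + c (- 8/s * x + (8/s - 1)) - 2 *\<^sub>R \<gamma> 0"

lemma based_loop_profile_cases:
  fixes c \<gamma> :: "real \<Rightarrow> 'a::real_normed_vector"
  assumes c: "\<And>t. 1 \<le> t \<Longrightarrow> c t = \<gamma> 0" and s: "0 < s" "s \<le> 1"
  shows "based_loop_profile c \<gamma> s x =
    (if x \<le> s/2 then c (8/s * x + - 1)
     else if 1 - s/2 \<le> x then c (- 8/s * x + (8/s - 1))
     else \<gamma> (pinch s x))"
proof -
  have eight: "8 \<le> 8/s" and end_point: "8/s * (1 - s/2) = 8/s - 4"
    using s by (simp_all add: field_simps)
  consider "x \<le> s/2" | "\<not> x \<le> s/2" "1 - s/2 \<le> x" | "s/2 < x" "x < 1 - s/2"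
    by linarith
  then show ?thesis
  proof cases
    case 1
    have "8/s * x \<le> 4"
      using 1 s by (simp add: field_simps)
    with eight have "1 \<le> - 8/s * x + (8/s - 1)"
      by linarith
    with 1 s c show ?thesis
      by (simp add: based_loop_profile_def pinch_eq_0_left scaleR_2)
  next
    case 2
    have "8/s - 4 \<le> 8/s * x"
      using mult_left_mono[OF 2(2), of "8/s"] s end_point by simp
    with eight have "1 \<le> 8/s * x + - 1"
      by linarith
    with 2 s c show ?thesis
      by (simp add: based_loop_profile_def pinch_eq_0_right scaleR_2)
  next
    case 3
    have "4 \<le> 8/s * x"
      using 3 s by (simp add: field_simps)
    moreover have "8/s * x \<le> 8/s - 4"
      using mult_left_mono[of x "1 - s/2" "8/s"] 3 s end_point by simp
    ultimately have "1 \<le> 8/s * x + - 1" "1 \<le> - 8/s * x + (8/s - 1)"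
      by linarith+
    with 3 c show ?thesis
      by (simp add: based_loop_profile_def scaleR_2)
  qed
qed

lemma smooth_on_based_loop_profile:
  assumes "smooth_on UNIV c" "\<gamma> \<in> smooth_loops N"
  shows "smooth_on UNIV (based_loop_profile c \<gamma> s)"
proof -
  have "smooth_on UNIV (\<lambda>x. \<gamma> (pinch s x))"
    using smooth_on_compose[OF smooth_on_pinch smooth_loopsD(1)[OF assms(2)]] by simp
  then show ?thesis
    unfolding based_loop_profile_def[abs_def]
    by (intro smooth_on_diff smooth_on_add smooth_on_const smooth_on_affine_comp[OF assms(1)])
qed

lemma based_loop_eq_inside:
  fixes \<gamma> c :: "real \<Rightarrow> 'a::real_normed_vector"
  assumes \<gamma>: "\<gamma> \<in> smooth_loops N"
    and c: "smooth_on UNIV c" "range c \<subseteq> N" "\<And>t. t \<le> 0 \<Longrightarrow> c t = 0" "\<And>t. 1 \<le> t \<Longrightarrow> c t = \<gamma> 0"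
    and s: "0 < s" "s \<le> 1"
  obtains \<beta> where "\<beta> \<in> based_smooth_loops N" "\<And>t. t \<in> {s..1 - s} \<Longrightarrow> \<beta> t = \<gamma> t"
    "range \<beta> \<subseteq> range c \<union> range \<gamma>"
proof
  note B_cases = based_loop_profile_cases[where c = c and \<gamma> = \<gamma>, OF c(4) s]
  have "smooth_on UNIV (\<lambda>t. based_loop_profile c \<gamma> s (frac t))"
    using smooth_on_based_loop_profile[OF c(1) \<gamma>]
  proof (rule smooth_on_periodic_extension[where \<eta> = "s/8" and b = 0])
    show "based_loop_profile c \<gamma> s x = 0" if "x \<le> s/8" for x
    proof -
      have "8/s * x + - 1 \<le> 0"
        using that s by (simp add: field_simps)
      with that s show ?thesis
        by (simp add: B_cases c(3))
    qed
    show "based_loop_profile c \<gamma> s x = 0" if "1 - s/8 \<le> x" for x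
    proof -
      have "8/s * (1 - s/8) = 8/s - 1"
        using s by (simp add: field_simps)
      then have "- 8/s * x + (8/s - 1) \<le> 0"
        using mult_left_mono[OF that, of "8/s"] s by simp
      with that s show ?thesis
        by (simp add: B_cases c(3))
    qed
  qed (use s in auto)
  moreover have "based_loop_profile c \<gamma> s x \<in> range c \<union> range \<gamma>" for x
    by (simp add: B_cases)
  ultimately show "(\<lambda>t. based_loop_profile c \<gamma> s (frac t)) \<in> based_smooth_loops N"
    using c(2,3) smooth_loopsD(3)[OF \<gamma>] s
    by (auto simp: based_smooth_loops_def smooth_loops_def frac_1_eq B_cases)
  show "based_loop_profile c \<gamma> s (frac t) = \<gamma> t" if "t \<in> {s..1 - s}" for t
    using that s by (simp add: B_cases pinch_eq_id)
  show "range (\<lambda>t. based_loop_profile c \<gamma> s (frac t)) \<subseteq> range c \<union> range \<gamma>"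
    by (auto simp: B_cases)
qed

lemma joining_path_bounded:
  fixes c :: "real \<Rightarrow> 'a::real_normed_vector"
  assumes "smooth_on UNIV c" "\<And>t. t \<le> 0 \<Longrightarrow> c t = p" "\<And>t. 1 \<le> t \<Longrightarrow> c t = q"
  shows "bounded (range c)"
proof (rule bounded_range_if_range_subset_image)
  show "continuous_on {0..1} c"
    using smooth_on_imp_continuous_on[OF assms(1)] continuous_on_subset by blast
  show "range c \<subseteq> c ` {0..1}"
  proof (rule image_subsetI)
    fix t :: real
    have "c t = c (max 0 (min 1 t))"
      using assms(2,3) by (cases "t \<le> 0"; cases "1 \<le> t") auto
    moreover have "max 0 (min 1 t) \<in> {0..1}"
      by simp
    ultimately show "c t \<in> c ` {0..1}"
      by (rule image_eqI)
  qed
qed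

lemma smooth_loop_L2_approx_by_based_loops:
  fixes N :: "'a::euclidean_space set"
  assumes N: "smooth_submanifold N" "connected N" "0 \<in> N" and \<gamma>: "\<gamma> \<in> smooth_loops N" and "0 < e"
  shows "\<exists>\<beta>\<in>based_smooth_loops N. L2_dist \<gamma> \<beta> < e"
proof -
  have "\<gamma> 0 \<in> N"
    using smooth_loopsD(3)[OF \<gamma>] by auto
  then obtain c :: "real \<Rightarrow> 'a" where c: "smooth_on UNIV c" "range c \<subseteq> N"
    "\<And>t. t \<le> 0 \<Longrightarrow> c t = 0" "\<And>t. 1 \<le> t \<Longrightarrow> c t = \<gamma> 0"
    using smoothly_joinable_if_connected_submanifold[OF N] unfolding smoothly_joinable_def by metis
  have "bounded (range c \<union> range \<gamma>)"
    using joining_path_bounded[OF c(1,3,4)] smooth_loop_bounded[OF \<gamma>] by simp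
  then obtain M where M: "\<And>x. x \<in> range c \<union> range \<gamma> \<Longrightarrow> norm x \<le> M"
    unfolding bounded_iff by blast
  define d where "d = e\<^sup>2 / (8 * M\<^sup>2 + 1)"
  define s where "s = min 1 (d / 2)"
  have "0 < d"
    using \<open>0 < e\<close> by (simp add: d_def add_nonneg_pos)
  then have s: "0 < s" "s \<le> 1" "s < e\<^sup>2 / (8 * M\<^sup>2 + 1)"
    unfolding s_def d_def[symmetric] by auto
  obtain \<beta> where \<beta>: "\<beta> \<in> based_smooth_loops N" "\<And>t. t \<in> {s..1 - s} \<Longrightarrow> \<beta> t = \<gamma> t"
    "range \<beta> \<subseteq> range c \<union> range \<gamma>"
    using based_loop_eq_inside[OF \<gamma> c s(1,2)] by blast
  have "\<beta> \<in> smooth_loops N"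
    using \<beta>(1) by (simp add: based_smooth_loops_def)
  moreover have "norm (\<beta> t) \<le> M" "norm (\<gamma> t) \<le> M" for t
    using M[of "\<beta> t"] M[of "\<gamma> t"] \<beta>(3) by blast+
  ultimately have "L2_dist \<gamma> \<beta> < e"
    using \<gamma> \<beta>(2) s \<open>0 < e\<close>
    by (intro L2_dist_less_if_eq_inside[where M = M and s = s] smooth_loop_square_integrable) auto
  with \<beta>(1) show ?thesis
    by blast
qed

lemma L2_0_loops_eq_L2_loops:
  fixes N :: "'a::euclidean_space set"
  assumes "smooth_submanifold N" "connected N" "0 \<in> N"
  shows "L2_0_loops N = L2_loops N"
proof
  show "L2_0_loops N \<subseteq> L2_loops N"
    unfolding L2_0_loops_def L2_loops_def L2_closure_def based_smooth_loops_def by blast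
  show "L2_loops N \<subseteq> L2_0_loops N"
    unfolding L2_0_loops_def L2_loops_def
    by (intro L2_closure_subset smooth_loop_L2_approx_by_based_loops[OF assms] smooth_loop_square_integrable)
       (auto simp: based_smooth_loops_def)
qed

lemma piecewise_smooth_loop_const: "a \<in> N \<Longrightarrow> piecewise_smooth_loop N (\<lambda>t. a)"
  unfolding piecewise_smooth_loop_def
  by (intro conjI exI[of _ "{0, 1}"]) (auto intro!: exI[of _ "\<lambda>t. a"] smooth_on_const)

lemma null_homotopic_loop_const: "a \<in> N \<Longrightarrow> null_homotopic_loop N (\<lambda>t. a)"
  unfolding null_homotopic_loop_def
  by (intro exI[of _ a] homotopic_loops_refl[THEN iffD2])
     (auto simp: path_def path_image_def pathfinish_def pathstart_def)

theorem theorem2: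
  fixes N :: "(complex ^ 'n ^ 'n) set"
  assumes "smooth_submanifold N" and "connected N" and "0 \<in> N"
  shows "L2_0_loops N = L2_loops N \<and>
    (\<forall>\<gamma>\<in>smooth_loops N. \<exists>p \<sigma>. piecewise_smooth_loop N \<sigma> \<and> null_homotopic_loop N \<sigma> \<and>
        L2_path_connects N p \<gamma> \<sigma>)"
proof (intro conjI ballI)
  show "L2_0_loops N = L2_loops N"
    using L2_0_loops_eq_L2_loops[OF assms] .
  fix \<gamma> assume \<gamma>: "\<gamma> \<in> smooth_loops N"
  then have "\<gamma> 0 \<in> N"
    using smooth_loopsD(3) by blast
  then show "\<exists>p \<sigma>. piecewise_smooth_loop N \<sigma> \<and> null_homotopic_loop N \<sigma> \<and> L2_path_connects N p \<gamma> \<sigma>"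
    using piecewise_smooth_loop_const[OF \<open>\<gamma> 0 \<in> N\<close>] null_homotopic_loop_const[OF \<open>\<gamma> 0 \<in> N\<close>]
      smooth_loop_L2_path_to_constant[OF \<gamma>]
    by blast
qed

end
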